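(* Consider the Single-Demand Facility Location setting with $n$ facilities $F=[n]$, positive capacities $s_1,\dots,s_n$ and demand $D>0$. Let $\mathcal{R}=\{(x^1,y^1),\dots,(x^r,y^r)\}$ be the set of all canonical feasible solutions. Then every feasible solution $(x,y)$ can be written as $(x,y)=\sum_{k=1}^r\lambda_k(x^k,y^k)$ with $\lambda_k\geqslant 0$ for all $k$ and $\sum_{k=1}^r\lambda_k=1$.
   Context: A feasible solution is a pair $(x,y)$ with $y\in\{0,1\}^n$ and $x\in[0,1]^n$ such that $\sum_{i=1}^n x_i=1$ and $0\leqslant x_iD\leqslant y_is_i$ for all $i\in F$. For a feasible solution let $B=\{i\in F: y_i=1\}$ and $\widetilde{F}_2=\{i\in B: 0<x_iD<s_iy_i\}$. A feasible solution is canonical if $|\widetilde{F}_2|\leqslant 1$, i.e. at most one facility supplies a nonzero amount strictly below its capacity. (The set $\mathcal{R}$ is finite.) *)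

theory Defs
  imports "HOL-Analysis.Analysis"
begin

text \<open>Facilities F = [n] are modelled by a finite index type 'n (n = CARD('n)).
  A solution is a pair (x, y) of vectors in real^'n; y is 0/1-valued.\<close>

definition feasible :: "real^'n \<Rightarrow> real \<Rightarrow> real^'n \<Rightarrow> real^'n \<Rightarrow> bool" where
  "feasible s D x y \<longleftrightarrow>
     (\<forall>i. y$i \<in> {0, 1}) \<and> (\<forall>i. 0 \<le> x$i \<and> x$i \<le> 1) \<and>
     (\<Sum>i\<in>UNIV. x$i) = 1 \<and>
     (\<forall>i. 0 \<le> x$i * D \<and> x$i * D \<le> y$i * s$i)"

definition open_facilities :: "real^'n \<Rightarrow> 'n set" where
  "open_facilities y = {i. y$i = 1}"

definition F2_tilde :: "real^'n \<Rightarrow> real \<Rightarrow> real^'n \<Rightarrow> real^'n \<Rightarrow> 'n set" where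
  "F2_tilde s D x y = {i \<in> open_facilities y. 0 < x$i * D \<and> x$i * D < s$i * y$i}"

definition canonical :: "real^'n \<Rightarrow> real \<Rightarrow> real^'n \<Rightarrow> real^'n \<Rightarrow> bool" where
  "canonical s D x y \<longleftrightarrow> feasible s D x y \<and> card (F2_tilde s D x y) \<le> 1"

definition canonical_set :: "real^'n \<Rightarrow> real \<Rightarrow> ((real^'n) \<times> (real^'n)) set" where
  "canonical_set s D = {p. canonical s D (fst p) (snd p)}"

end

theory Submission
  imports Defs
begin

text \<open>A feasible solution with two facilities i, j that are open but only partially used can be
  moved along the direction e_i - e_j in both senses until one of them becomes empty or full.
  Both endpoints are feasible with a smaller set of partially used facilities, and the original
  solution lies on the segment between them; induction on that set puts every feasible solution
  into the convex hull of the canonical ones. A canonical solution is determined by its open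
  facilities, its unused facilities and its (at most one) partially used facility, since the
  remaining flows are 0 or s_i/D and the last one is fixed by the total flow 1. Hence there are
  only finitely many canonical solutions and the convex hull is a finite convex combination.\<close>

lemma vec_eq_if_sum_eq_and_agree_off_one:
  fixes x x' :: "'a::ab_group_add^'n"
  assumes "(\<Sum>i\<in>UNIV. x$i) = (\<Sum>i\<in>UNIV. x'$i)" and "card A \<le> 1"
    and "\<And>k. k \<notin> A \<Longrightarrow> x$k = x'$k"
  shows "x = x'"
proof (cases "A = {}")
  case True
  then show ?thesis using assms(3) by (simp add: vec_eq_iff)
next
  case False
  then obtain j where A: "A = {j}"
    using assms(2) by (metis One_nat_def card_1_singletonE card_0_eq finite le_Suc_eq le_zero_eq)
  have "(\<Sum>i\<in>UNIV-{j}. x$i) = (\<Sum>i\<in>UNIV-{j}. x'$i)"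
    using assms(3) A by (intro sum.cong) auto
  with assms(1) have "x$j = x'$j"
    by (simp add: sum.remove[of UNIV j])
  then show ?thesis using assms(3) A by (metis singletonD vec_eq_iff)
qed

lemma in_convex_hull_between:
  fixes z d :: "'a::real_vector"
  assumes "z + b *\<^sub>R d \<in> convex hull S" and "z - a *\<^sub>R d \<in> convex hull S"
    and "a > 0" and "b > 0"
  shows "z \<in> convex hull S"
proof -
  define u where "u = a / (a + b)"
  have u: "0 \<le> u" "0 \<le> 1 - u" using assms(3,4) by (auto simp: u_def field_simps)
  have "(1 - u) * a = u * b" using assms(3,4) by (simp add: u_def field_simps)
  then have "u *\<^sub>R (z + b *\<^sub>R d) + (1 - u) *\<^sub>R (z - a *\<^sub>R d) = z"
    by (simp add: algebra_simps scaleR_add_left[symmetric] del: scaleR_add_left)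
  moreover have "u *\<^sub>R (z + b *\<^sub>R d) + (1 - u) *\<^sub>R (z - a *\<^sub>R d) \<in> convex hull S"
    using convexD[OF convex_convex_hull assms(1,2) u] by simp
  ultimately show ?thesis by simp
qed

lemma feasible_eq_if_open_facilities_eq:
  assumes "feasible s D x y" and "feasible s D x' y'"
    and "open_facilities y = open_facilities y'"
  shows "y = y'"
proof (rule vec_eq_iff[THEN iffD2], intro allI)
  fix i
  have "y$i \<in> {0, 1}" "y'$i \<in> {0, 1}" using assms(1,2) by (auto simp: feasible_def)
  moreover have "y$i = 1 \<longleftrightarrow> y'$i = 1"
    using assms(3) by (auto simp: open_facilities_def set_eq_iff)
  ultimately show "y$i = y'$i" by auto
qed

lemma feasible_not_in_F2_tilde:
  assumes "D > 0" and "feasible s D x y" and "k \<notin> F2_tilde s D x y"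
  shows "x$k = 0 \<or> x$k * D = s$k * y$k"
proof -
  have "y$k \<in> {0, 1}" "0 \<le> x$k * D" "x$k * D \<le> y$k * s$k"
    using assms(2) by (auto simp: feasible_def)
  then show ?thesis
    using assms(1,3) by (auto simp: F2_tilde_def open_facilities_def)
qed

lemma canonical_eqI:
  assumes D: "D > 0" and c: "canonical s D x y" and c': "canonical s D x' y'"
    and opn: "open_facilities y = open_facilities y'"
    and zero: "{i. x$i = 0} = {i. x'$i = 0}"
    and part: "F2_tilde s D x y = F2_tilde s D x' y'"
  shows "x = x' \<and> y = y'"
proof
  have f: "feasible s D x y" and f': "feasible s D x' y'"
    using c c' by (auto simp: canonical_def)
  show y: "y = y'" using feasible_eq_if_open_facilities_eq[OF f f' opn] .
  have agree: "x$k = x'$k" if k: "k \<notin> F2_tilde s D x y" for k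
  proof -
    have "x$k = 0 \<or> x$k * D = s$k * y$k" using feasible_not_in_F2_tilde[OF D f k] .
    moreover have "x'$k = 0 \<or> x'$k * D = s$k * y$k"
      using feasible_not_in_F2_tilde[OF D f'] k part y by simp
    moreover have "x$k = 0 \<longleftrightarrow> x'$k = 0" using zero by (auto simp: set_eq_iff)
    ultimately show ?thesis using D by (metis mult_right_cancel less_irrefl)
  qed
  have card: "card (F2_tilde s D x y) \<le> 1" using c by (simp add: canonical_def)
  have sum: "(\<Sum>i\<in>UNIV. x$i) = (\<Sum>i\<in>UNIV. x'$i)"
    using f f' by (simp add: feasible_def)
  show "x = x'" using vec_eq_if_sum_eq_and_agree_off_one[OF sum card agree] .
qed

lemma finite_canonical_set:
  fixes s :: "real^'n"
  assumes "D > 0"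
  shows "finite (canonical_set s D)"
proof -
  let ?sig = "\<lambda>p::(real^'n) \<times> (real^'n).
    (open_facilities (snd p), {i. fst p $ i = 0}, F2_tilde s D (fst p) (snd p))"
  have "inj_on ?sig (canonical_set s D)"
  proof (rule inj_onI)
    fix p q
    assume p: "p \<in> canonical_set s D" and q: "q \<in> canonical_set s D" and sig: "?sig p = ?sig q"
    have "fst p = fst q \<and> snd p = snd q"
      using p q sig by (intro canonical_eqI[OF assms]) (auto simp: canonical_set_def)
    then show "p = q" by (simp add: prod_eq_iff)
  qed
  then show ?thesis by (rule finite_imageD[OF finite])
qed

lemma feasible_shift:
  fixes x :: "real^'n"
  assumes D: "D > 0" and f: "feasible s D x y" and ij: "i \<noteq> j"
    and y: "y$i = 1" "y$j = 1"
    and ti: "x$i + t \<in> {0 .. s$i / D}" and tj: "x$j - t \<in> {0 .. s$j / D}"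
  shows "feasible s D (x + t *\<^sub>R (axis i 1 - axis j 1)) y"
proof -
  let ?x' = "x + t *\<^sub>R (axis i 1 - axis j 1)"
  have comp: "?x'$k = (if k = i then x$i + t else if k = j then x$j - t else x$k)" for k
    using ij by (auto simp: axis_def)
  have bnd: "0 \<le> ?x'$k * D \<and> ?x'$k * D \<le> y$k * s$k" for k
    unfolding comp using f ti tj y D by (auto simp: feasible_def pos_le_divide_eq)
  have nonneg: "0 \<le> ?x'$k" for k
    using bnd[of k] D by (simp add: zero_le_mult_iff)
  have "(\<Sum>k\<in>UNIV. ?x'$k) = (\<Sum>k\<in>UNIV. x$k) + t * (\<Sum>k\<in>UNIV. (axis i 1 - axis j 1 :: real^'n)$k)"
    by (simp add: sum.distrib sum_distrib_left)
  also have "\<dots> = 1"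
    using f by (simp add: sum_subtractf axis_def feasible_def)
  finally have sum: "(\<Sum>k\<in>UNIV. ?x'$k) = 1" .
  have "?x'$k \<le> 1" for k
    using member_le_sum[of k UNIV "\<lambda>k. ?x'$k"] nonneg sum by simp
  with bnd nonneg sum f show ?thesis by (simp add: feasible_def)
qed

lemma F2_tilde_shift_outside:
  "F2_tilde s D (x + t *\<^sub>R (axis i 1 - axis j 1)) y - {i, j} = F2_tilde s D x y - {i, j}"
  by (auto simp: F2_tilde_def axis_def)

lemma F2_tilde_shift_to_boundary:
  assumes D: "D > 0"
    and i: "i \<in> F2_tilde s D x y" and j: "j \<in> F2_tilde s D x y" and ij: "i \<noteq> j"
    and hit: "x$i + t \<in> {0, s$i / D} \<or> x$j - t \<in> {0, s$j / D}"
  shows "F2_tilde s D (x + t *\<^sub>R (axis i 1 - axis j 1)) y \<subset> F2_tilde s D x y"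
proof -
  let ?x' = "x + t *\<^sub>R (axis i 1 - axis j 1)"
  have comp: "?x'$i = x$i + t" "?x'$j = x$j - t" using ij by (auto simp: axis_def)
  have "y$i = 1" "y$j = 1" using i j by (auto simp: F2_tilde_def open_facilities_def)
  then have "i \<notin> F2_tilde s D ?x' y \<or> j \<notin> F2_tilde s D ?x' y"
    unfolding F2_tilde_def mem_Collect_eq comp using hit D by auto
  then show ?thesis
    using F2_tilde_shift_outside[of s D x t i j y] i j by blast
qed

lemma feasible_in_convex_hull_canonical:
  fixes s x y :: "real^'n"
  assumes D: "D > 0"
  shows "feasible s D x y \<Longrightarrow> (x, y) \<in> convex hull (canonical_set s D)"
proof (induction "card (F2_tilde s D x y)" arbitrary: x rule: less_induct)
  case less
  show ?case
  proof (cases "card (F2_tilde s D x y) \<le> 1")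
    case True
    then have "(x, y) \<in> canonical_set s D"
      using less.prems by (simp add: canonical_set_def canonical_def)
    then show ?thesis by (rule hull_inc)
  next
    case False
    then obtain i j where i: "i \<in> F2_tilde s D x y" and j: "j \<in> F2_tilde s D x y"
      and ij: "i \<noteq> j"
      by (metis One_nat_def card_le_Suc0_iff_eq finite)
    have y: "y$i = 1" "y$j = 1" using i j by (auto simp: F2_tilde_def open_facilities_def)
    have xi: "0 < x$i" "x$i < s$i / D" and xj: "0 < x$j" "x$j < s$j / D"
      using i j y D by (auto simp: F2_tilde_def pos_less_divide_eq zero_less_mult_iff)
    define d :: "real^'n" where "d = axis i 1 - axis j 1"
    have shift_in_hull: "(x + t *\<^sub>R d, y) \<in> convex hull (canonical_set s D)"
      if "x$i + t \<in> {0 .. s$i / D}" "x$j - t \<in> {0 .. s$j / D}"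
        "x$i + t \<in> {0, s$i / D} \<or> x$j - t \<in> {0, s$j / D}" for t
    proof -
      have "feasible s D (x + t *\<^sub>R d) y"
        unfolding d_def using feasible_shift[OF D less.prems ij y that(1,2)] .
      moreover have "card (F2_tilde s D (x + t *\<^sub>R d) y) < card (F2_tilde s D x y)"
        unfolding d_def
        using psubset_card_mono[OF finite F2_tilde_shift_to_boundary[OF D i j ij that(3)]] .
      ultimately show ?thesis using less.hyps by blast
    qed
    define b where "b = min (s$i / D - x$i) (x$j)"
    define a where "a = min (x$i) (s$j / D - x$j)"
    have "(x, y) + b *\<^sub>R (d, 0) \<in> convex hull (canonical_set s D)"
      using shift_in_hull[of b] xi xj by (auto simp: b_def min_def)
    moreover have "(x, y) - a *\<^sub>R (d, 0) \<in> convex hull (canonical_set s D)"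
      using shift_in_hull[of "-a"] xi xj by (auto simp: a_def min_def)
    moreover have "a > 0" "b > 0" using xi xj by (auto simp: a_def b_def)
    ultimately show ?thesis by (rule in_convex_hull_between)
  qed
qed

theorem lemma2:
  fixes s x y :: "real^'n" and D :: real
  assumes "\<forall>i. s$i > 0" and "D > 0" and "feasible s D x y"
  shows "\<exists>lam. (\<forall>p\<in>canonical_set s D. lam p \<ge> 0) \<and>
              (\<Sum>p\<in>canonical_set s D. lam p) = 1 \<and>
              (x, y) = (\<Sum>p\<in>canonical_set s D. lam p *\<^sub>R p)"
proof -
  have "(x, y) \<in> convex hull (canonical_set s D)"
    using feasible_in_convex_hull_canonical assms(2,3) .
  then show ?thesis
    unfolding convex_hull_finite[OF finite_canonical_set[OF assms(2)]] by auto
qed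

end
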